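(* Let $X$ be a $d$-uniform simplicial complex, $k\le d$, and $f:X(k)\to[0,1]$ satisfy, for all $t>0$, $\Pr_{X(k)}[f-\mathbb{E}[f]>t]\le up(t)$ and $\Pr_{X(k)}[f-\mathbb{E}[f]<-t]\le low(t)$ for some functions $up,low:\mathbb{R}_+\to[0,1]$. Then the $d$-lift $U_{k,d}f:X(d)\to\mathbb{R}$ satisfies, for all $t>0$, \[\Pr_{X(d)}[U_{k,d}f-\mathbb{E}[f]>t]\le up(\tfrac t2)\left(1-\pi_{low}^{d,k,f}(\tfrac t2)\right)^{-1},\qquad \Pr_{X(d)}[U_{k,d}f-\mathbb{E}[f]<-t]\le low(\tfrac t2)\left(1-\pi_{up}^{d,k,f}(\tfrac t2)\right)^{-1}.\]
   Context: $X$ is a $d$-uniform simplicial complex (downward-closed set family with maximal sets of size $d$, $X(j)$ its faces of size $j$) with a distribution $\pi_d$ on $X(d)$, inducing $\pi_j$ on $X(j)$ by uniform subsampling; probabilities over $X(j)$ are with respect to $\pi_j$. The lift is $U_{k,d}f(s)=\mathbb{E}_{r\subseteq s}[f(r)]$ over uniformly random $k$-subsets $r$ of $s\in X(d)$. Define $\pi_{up}^{d,k,f}(t)=\max_{s\in X(d)}\Pr_{r\subseteq s}[f(r)-\mathbb{E}_{r\subseteq s}[f]>t]$ and $\pi_{low}^{d,k,f}(t)=\max_{s\in X(d)}\Pr_{r\subseteq s}[f(r)-\mathbb{E}_{r\subseteq s}[f]<-t]$, with $r$ a uniformly random $k$-subset of $s$. *)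

theory Defs
  imports Complex_Main
begin

text \<open>A d-uniform simplicial complex is given by its top faces Xd (finite sets of
  size d); the complex is their downward closure. p is the distribution pi_d on Xd.\<close>

definition simplicial_dist :: "'a set set \<Rightarrow> nat \<Rightarrow> ('a set \<Rightarrow> real) \<Rightarrow> bool" where
  "simplicial_dist Xd d p \<longleftrightarrow> finite Xd \<and> (\<forall>s\<in>Xd. finite s \<and> card s = d)
     \<and> (\<forall>s\<in>Xd. 0 \<le> p s) \<and> (\<Sum>s\<in>Xd. p s) = 1"

definition faces :: "'a set set \<Rightarrow> nat \<Rightarrow> 'a set set" where
  "faces Xd j = {r. \<exists>s\<in>Xd. r \<subseteq> s \<and> card r = j}"

text \<open>pi_j induced by uniform subsampling: draw s from pi_d, then a uniform j-subset of s.\<close>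
definition pi_j :: "'a set set \<Rightarrow> nat \<Rightarrow> ('a set \<Rightarrow> real) \<Rightarrow> nat \<Rightarrow> 'a set \<Rightarrow> real" where
  "pi_j Xd d p j r = (\<Sum>s\<in>{s\<in>Xd. r \<subseteq> s}. p s) / real (d choose j)"

definition prob_faces :: "'a set set \<Rightarrow> nat \<Rightarrow> ('a set \<Rightarrow> real) \<Rightarrow> nat \<Rightarrow> ('a set \<Rightarrow> bool) \<Rightarrow> real" where
  "prob_faces Xd d p j P = (\<Sum>r\<in>{r\<in>faces Xd j. P r}. pi_j Xd d p j r)"

definition expect_faces :: "'a set set \<Rightarrow> nat \<Rightarrow> ('a set \<Rightarrow> real) \<Rightarrow> nat \<Rightarrow> ('a set \<Rightarrow> real) \<Rightarrow> real" where
  "expect_faces Xd d p j f = (\<Sum>r\<in>faces Xd j. pi_j Xd d p j r * f r)"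

definition lift :: "nat \<Rightarrow> nat \<Rightarrow> ('a set \<Rightarrow> real) \<Rightarrow> 'a set \<Rightarrow> real" where
  "lift k d f s = (\<Sum>r\<in>{r. r \<subseteq> s \<and> card r = k}. f r) / real (d choose k)"

definition local_prob :: "nat \<Rightarrow> nat \<Rightarrow> 'a set \<Rightarrow> ('a set \<Rightarrow> bool) \<Rightarrow> real" where
  "local_prob k d s P = real (card {r. r \<subseteq> s \<and> card r = k \<and> P r}) / real (d choose k)"

definition pi_up :: "'a set set \<Rightarrow> nat \<Rightarrow> nat \<Rightarrow> ('a set \<Rightarrow> real) \<Rightarrow> real \<Rightarrow> real" where
  "pi_up Xd d k f t = Max ((\<lambda>s. local_prob k d s (\<lambda>r. f r - lift k d f s > t)) ` Xd)"

definition pi_low :: "'a set set \<Rightarrow> nat \<Rightarrow> nat \<Rightarrow> ('a set \<Rightarrow> real) \<Rightarrow> real \<Rightarrow> real" where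
  "pi_low Xd d k f t = Max ((\<lambda>s. local_prob k d s (\<lambda>r. f r - lift k d f s < - t)) ` Xd)"

end

theory Submission
  imports Defs
begin

text \<open>If the lift exceeds the mean by more than t on a top face s, then every k-subface r of s
  with f r - E f \<le> t/2 lies more than t/2 below the local average, so a fraction at least
  1 - pi_low(t/2) of the k-subfaces of s have f r - E f > t/2. Sampling a k-face as a uniform
  subface of a pi_d-random top face, the probability of f - E f > t/2 is therefore at least
  (1 - pi_low(t/2)) times the probability that the lift exceeds the mean by more than t.\<close>

lemma finite_faces:
  assumes "simplicial_dist Xd d p"
  shows "finite (faces Xd j)"
proof (rule finite_subset)
  show "faces Xd j \<subseteq> (\<Union>s\<in>Xd. Pow s)" unfolding faces_def by auto
  show "finite (\<Union>s\<in>Xd. Pow s)" using assms unfolding simplicial_dist_def by auto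
qed

lemma top_face_eq_superset:
  assumes "simplicial_dist Xd d p" "s \<in> Xd" "s' \<in> Xd" "s \<subseteq> s'"
  shows "s' = s"
  using assms unfolding simplicial_dist_def by (metis card_subset_eq)

lemma faces_top:
  assumes cx: "simplicial_dist Xd d p"
  shows "faces Xd d = Xd"
proof
  show "faces Xd d \<subseteq> Xd"
  proof
    fix r assume "r \<in> faces Xd d"
    then obtain s where s: "s \<in> Xd" "r \<subseteq> s" "card r = d" unfolding faces_def by auto
    with cx have "r = s" unfolding simplicial_dist_def by (metis card_subset_eq)
    with s show "r \<in> Xd" by simp
  qed
  show "Xd \<subseteq> faces Xd d" using cx unfolding faces_def simplicial_dist_def by auto
qed

lemma prob_faces_top:
  assumes cx: "simplicial_dist Xd d p"
  shows "prob_faces Xd d p d Q = (\<Sum>s\<in>{s\<in>Xd. Q s}. p s)"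
proof -
  have "pi_j Xd d p d s = p s" if "s \<in> Xd" for s
  proof -
    have "{s'\<in>Xd. s \<subseteq> s'} = {s}"
      using that top_face_eq_superset[OF cx that] by auto
    then show ?thesis unfolding pi_j_def by simp
  qed
  then show ?thesis unfolding prob_faces_def faces_top[OF cx] by simp
qed

lemma prob_faces_eq_sum_local_prob:
  assumes cx: "simplicial_dist Xd d p"
  shows "prob_faces Xd d p k P = (\<Sum>s\<in>Xd. p s * local_prob k d s P)"
proof -
  define F where "F = {r\<in>faces Xd k. P r}"
  have fF: "finite F" using finite_faces[OF cx] unfolding F_def by simp
  have fX: "finite Xd" using cx unfolding simplicial_dist_def by auto
  have subfaces: "{r\<in>F. r \<subseteq> s} = {r. r \<subseteq> s \<and> card r = k \<and> P r}" if "s \<in> Xd" for s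
    using that unfolding F_def faces_def by auto
  have "prob_faces Xd d p k P = (\<Sum>r\<in>F. \<Sum>s\<in>{s\<in>Xd. r \<subseteq> s}. p s) / real (d choose k)"
    unfolding prob_faces_def pi_j_def F_def by (simp add: sum_divide_distrib)
  also have "\<dots> = (\<Sum>s\<in>Xd. \<Sum>r\<in>{r\<in>F. r \<subseteq> s}. p s) / real (d choose k)"
    by (simp only: sum.swap_restrict[OF fF fX])
  also have "\<dots> = (\<Sum>s\<in>Xd. p s * local_prob k d s P)"
    unfolding local_prob_def by (simp add: subfaces sum_divide_distrib mult.commute cong: sum.cong)
  finally show ?thesis .
qed

lemma local_prob_nonneg: "0 \<le> local_prob k d s P"
  unfolding local_prob_def by simp

lemma local_prob_complement:
  assumes fs: "finite s" and cs: "card s = d" and kd: "k \<le> d"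
    and imp: "\<And>r. \<not> P r \<Longrightarrow> P' r"
  shows "1 - local_prob k d s P' \<le> local_prob k d s P"
proof -
  let ?S = "\<lambda>P. {r. r \<subseteq> s \<and> card r = k \<and> P r}"
  have fin: "finite (?S P)" for P using fs by simp
  have "d choose k = card (?S (\<lambda>_. True))" using n_subsets[OF fs] cs by simp
  also have "\<dots> \<le> card (?S P \<union> ?S P')"
    using imp fin by (intro card_mono) auto
  also have "\<dots> \<le> card (?S P) + card (?S P')" by (rule card_Un_le)
  finally have "real (d choose k) \<le> real (card (?S P)) + real (card (?S P'))" by linarith
  moreover have "real (d choose k) > 0" using kd by simp
  ultimately have "1 \<le> real (card (?S P)) / real (d choose k) + real (card (?S P')) / real (d choose k)"
    by (simp add: add_divide_distrib[symmetric])
  then show ?thesis unfolding local_prob_def by linarith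
qed

lemma prob_faces_top_le_divide:
  assumes cx: "simplicial_dist Xd d p"
    and c1: "c < 1"
    and local: "\<And>s. s \<in> Xd \<Longrightarrow> Q s \<Longrightarrow> 1 - c \<le> local_prob k d s P"
  shows "prob_faces Xd d p d Q \<le> prob_faces Xd d p k P / (1 - c)"
proof -
  have fX: "finite Xd" and p0: "\<And>s. s \<in> Xd \<Longrightarrow> 0 \<le> p s"
    using cx unfolding simplicial_dist_def by auto
  have "prob_faces Xd d p d Q * (1 - c) = (\<Sum>s\<in>{s\<in>Xd. Q s}. p s * (1 - c))"
    unfolding prob_faces_top[OF cx] by (simp add: sum_distrib_right)
  also have "\<dots> \<le> (\<Sum>s\<in>{s\<in>Xd. Q s}. p s * local_prob k d s P)"
    using local p0 by (intro sum_mono mult_left_mono) auto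
  also have "\<dots> \<le> (\<Sum>s\<in>Xd. p s * local_prob k d s P)"
    using fX by (intro sum_mono2) (auto intro!: mult_nonneg_nonneg p0 local_prob_nonneg)
  also have "\<dots> = prob_faces Xd d p k P"
    by (simp add: prob_faces_eq_sum_local_prob[OF cx])
  finally show ?thesis using c1 by (simp add: field_simps)
qed

lemma lift_upper_tail:
  assumes cx: "simplicial_dist Xd d p" and kd: "k \<le> d"
    and c1: "pi_low Xd d k f (t/2) < 1"
  shows "prob_faces Xd d p d (\<lambda>s. lift k d f s - m > t)
           \<le> prob_faces Xd d p k (\<lambda>r. f r - m > t/2) / (1 - pi_low Xd d k f (t/2))"
proof (rule prob_faces_top_le_divide[OF cx c1])
  fix s assume s: "s \<in> Xd" and Q: "lift k d f s - m > t"
  have "1 - local_prob k d s (\<lambda>r. f r - lift k d f s < - (t/2))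
          \<le> local_prob k d s (\<lambda>r. f r - m > t/2)"
    using s cx kd Q unfolding simplicial_dist_def by (intro local_prob_complement) auto
  moreover have "local_prob k d s (\<lambda>r. f r - lift k d f s < - (t/2)) \<le> pi_low Xd d k f (t/2)"
    using s cx unfolding pi_low_def simplicial_dist_def by (intro Max_ge) auto
  ultimately show "1 - pi_low Xd d k f (t/2) \<le> local_prob k d s (\<lambda>r. f r - m > t/2)"
    by linarith
qed

lemma lift_lower_tail:
  assumes cx: "simplicial_dist Xd d p" and kd: "k \<le> d"
    and c1: "pi_up Xd d k f (t/2) < 1"
  shows "prob_faces Xd d p d (\<lambda>s. lift k d f s - m < - t)
           \<le> prob_faces Xd d p k (\<lambda>r. f r - m < - (t/2)) / (1 - pi_up Xd d k f (t/2))"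
proof (rule prob_faces_top_le_divide[OF cx c1])
  fix s assume s: "s \<in> Xd" and Q: "lift k d f s - m < - t"
  have "1 - local_prob k d s (\<lambda>r. f r - lift k d f s > t/2)
          \<le> local_prob k d s (\<lambda>r. f r - m < - (t/2))"
    using s cx kd Q unfolding simplicial_dist_def by (intro local_prob_complement) auto
  moreover have "local_prob k d s (\<lambda>r. f r - lift k d f s > t/2) \<le> pi_up Xd d k f (t/2)"
    using s cx unfolding pi_up_def simplicial_dist_def by (intro Max_ge) auto
  ultimately show "1 - pi_up Xd d k f (t/2) \<le> local_prob k d s (\<lambda>r. f r - m < - (t/2))"
    by linarith
qed

theorem mainTheorem10:
  fixes Xd :: "'a set set" and d k :: nat and p f :: "'a set \<Rightarrow> real"
    and up low :: "real \<Rightarrow> real"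
  assumes cx: "simplicial_dist Xd d p"
    and kd: "k \<le> d"
    and f01: "\<forall>r\<in>faces Xd k. 0 \<le> f r \<and> f r \<le> 1"
    and up01: "\<forall>t>0. 0 \<le> up t \<and> up t \<le> 1"
    and low01: "\<forall>t>0. 0 \<le> low t \<and> low t \<le> 1"
    and up_tail: "\<forall>t>0. prob_faces Xd d p k
                    (\<lambda>r. f r - expect_faces Xd d p k f > t) \<le> up t"
    and low_tail: "\<forall>t>0. prob_faces Xd d p k
                    (\<lambda>r. f r - expect_faces Xd d p k f < - t) \<le> low t"
  shows "\<forall>t>0.
     (pi_low Xd d k f (t/2) < 1 \<longrightarrow>
        prob_faces Xd d p d (\<lambda>s. lift k d f s - expect_faces Xd d p k f > t)
          \<le> up (t/2) / (1 - pi_low Xd d k f (t/2)))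
   \<and> (pi_up Xd d k f (t/2) < 1 \<longrightarrow>
        prob_faces Xd d p d (\<lambda>s. lift k d f s - expect_faces Xd d p k f < - t)
          \<le> low (t/2) / (1 - pi_up Xd d k f (t/2)))"
proof (intro allI impI conjI)
  fix t :: real assume "t > 0"
  then have t2: "t/2 > 0" by simp
  show "prob_faces Xd d p d (\<lambda>s. lift k d f s - expect_faces Xd d p k f > t)
          \<le> up (t/2) / (1 - pi_low Xd d k f (t/2))" if "pi_low Xd d k f (t/2) < 1"
    using lift_upper_tail[OF cx kd that] up_tail t2 that
    by (meson divide_right_mono diff_ge_0_iff_ge less_imp_le order.trans)
  show "prob_faces Xd d p d (\<lambda>s. lift k d f s - expect_faces Xd d p k f < - t)
          \<le> low (t/2) / (1 - pi_up Xd d k f (t/2))" if "pi_up Xd d k f (t/2) < 1"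
    using lift_lower_tail[OF cx kd that] low_tail t2 that
    by (meson divide_right_mono diff_ge_0_iff_ge less_imp_le order.trans)
qed

end
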